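(* Let $K$ be a compact Hausdorff space, $X$ a Banach space, and $t_0$ an accumulation point of $K$. If $f\in C(K,X)$ satisfies $\|f\|_\infty=1$ and $\|f(t_0)\|=1$, then $f$ is a ccs Daugavet point of $C(K,X)$. Consequently, for scalar-valued $C(K)$, the notions of $\Delta$-point, Daugavet point, super $\Delta$-point, super Daugavet point, ccs $\Delta$-point and ccs Daugavet point all coincide.
   Context: $C(K,X)$ is the space of continuous $X$-valued functions on $K$ with the supremum norm. For a Banach space $Z$ and $z\in S_Z$: slices of $B_Z$ are non-empty sets $\{w\in B_Z:\operatorname{Re}z^*(w)>\|z^*\|-\delta\}$ ($z^*\in Z^*$, $\delta>0$); a ccs is $\sum_{i=1}^n\lambda_iS_i$ with $\lambda_i\in(0,1]$, $\sum\lambda_i=1$, $S_i$ slices. $z$ is a $\Delta$-point (resp. super $\Delta$-point, ccs $\Delta$-point) if $\sup_{w\in A}\|z-w\|=2$ for every slice (resp. relatively weakly open subset, ccs) $A$ of $B_Z$ containing $z$; $z$ is a Daugavet point (resp. super Daugavet point, ccs Daugavet point) if $\sup_{w\in A}\|z-w\|=2$ for every slice (resp. non-empty relatively weakly open subset, ccs) $A$ of $B_Z$. *)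

theory Defs
  imports "HOL-Analysis.Analysis"
begin

text \<open>Dual elements z* are continuous (real-)linear functionals, i.e. elements of the type of bounded linear maps into real;
  for complex spaces, Re z* ranges exactly over the real continuous functionals, with the same norm.\<close>

definition slice :: "'z::real_normed_vector set \<Rightarrow> bool" where
  "slice S \<longleftrightarrow> S \<noteq> {} \<and>
     (\<exists>(zs :: 'z \<Rightarrow>\<^sub>L real) \<delta>. \<delta> > 0 \<and>
        S = {w \<in> cball 0 1. blinfun_apply zs w > norm zs - \<delta>})"

definition ccs :: "'z::real_normed_vector set \<Rightarrow> bool" where
  "ccs A \<longleftrightarrow> (\<exists>(n::nat) (lam::nat \<Rightarrow> real) (S::nat \<Rightarrow> 'z set).
     n \<ge> 1 \<and> (\<forall>i<n. 0 < lam i \<and> lam i \<le> 1 \<and> slice (S i)) \<and>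
     (\<Sum>i<n. lam i) = 1 \<and>
     A = {(\<Sum>i<n. lam i *\<^sub>R x i) | x. \<forall>i<n. x i \<in> S i})"

definition weakly_open :: "'z::real_normed_vector set \<Rightarrow> bool" where
  "weakly_open U \<longleftrightarrow> (\<forall>x\<in>U. \<exists>(F :: ('z \<Rightarrow>\<^sub>L real) set) \<epsilon>. finite F \<and> \<epsilon> > 0 \<and>
      {y. \<forall>zs\<in>F. \<bar>blinfun_apply zs y - blinfun_apply zs x\<bar> < \<epsilon>} \<subseteq> U)"

definition rel_weakly_open_ball :: "'z::real_normed_vector set \<Rightarrow> bool" where
  "rel_weakly_open_ball A \<longleftrightarrow> (\<exists>U. weakly_open U \<and> A = U \<inter> cball 0 1)"

definition delta_point :: "'z::real_normed_vector \<Rightarrow> bool" where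
  "delta_point z \<longleftrightarrow> norm z = 1 \<and>
     (\<forall>A. slice A \<and> z \<in> A \<longrightarrow> (SUP w\<in>A. norm (z - w)) = 2)"

definition super_delta_point :: "'z::real_normed_vector \<Rightarrow> bool" where
  "super_delta_point z \<longleftrightarrow> norm z = 1 \<and>
     (\<forall>A. rel_weakly_open_ball A \<and> z \<in> A \<longrightarrow> (SUP w\<in>A. norm (z - w)) = 2)"

definition ccs_delta_point :: "'z::real_normed_vector \<Rightarrow> bool" where
  "ccs_delta_point z \<longleftrightarrow> norm z = 1 \<and>
     (\<forall>A. ccs A \<and> z \<in> A \<longrightarrow> (SUP w\<in>A. norm (z - w)) = 2)"

definition daugavet_point :: "'z::real_normed_vector \<Rightarrow> bool" where
  "daugavet_point z \<longleftrightarrow> norm z = 1 \<and>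
     (\<forall>A. slice A \<longrightarrow> (SUP w\<in>A. norm (z - w)) = 2)"

definition super_daugavet_point :: "'z::real_normed_vector \<Rightarrow> bool" where
  "super_daugavet_point z \<longleftrightarrow> norm z = 1 \<and>
     (\<forall>A. rel_weakly_open_ball A \<and> A \<noteq> {} \<longrightarrow> (SUP w\<in>A. norm (z - w)) = 2)"

definition ccs_daugavet_point :: "'z::real_normed_vector \<Rightarrow> bool" where
  "ccs_daugavet_point z \<longleftrightarrow> norm z = 1 \<and>
     (\<forall>A. ccs A \<longrightarrow> (SUP w\<in>A. norm (z - w)) = 2)"

definition six_notions_agree :: "'z::real_normed_vector \<Rightarrow> bool" where
  "six_notions_agree z \<longleftrightarrow>
     (daugavet_point z \<longleftrightarrow> delta_point z) \<and>
     (super_delta_point z \<longleftrightarrow> delta_point z) \<and>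
     (super_daugavet_point z \<longleftrightarrow> delta_point z) \<and>
     (ccs_delta_point z \<longleftrightarrow> delta_point z) \<and>
     (ccs_daugavet_point z \<longleftrightarrow> delta_point z)"

end

theory Submission
  imports Defs
begin

text \<open>Near an accumulation point t0 of K one finds bumps h_m with pairwise disjoint supports and
  peaks h_m(s_m) = 1 at points where f is close to f(t0). A sequence of disjointly supported
  functions in a ball of C(K,X) is weakly null, since for every functional the series of the
  absolute values of its images is bounded by the norm of a single signed sum. Hence for any g in
  the unit ball the functions (1 - h_m) g - h_m f(t0) stay in the ball, converge weakly to g, and
  are at distance almost 2 from f. Every convex combination of slices, and every non-empty relatively
  weakly open subset of the ball, therefore contains such functions, so f is a ccs Daugavet and a
  super Daugavet point.

  Conversely, if X is an inner product space and g is a \<Delta>-point, then g attains its norm at an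
  accumulation point: otherwise the set T where g attains its norm is finite and open, and the slice
  cut out by the average of the functionals w \<mapsto> \<langle>g(t), w(t)\<rangle> over T stays at distance at most
  max 1 (1 + max_{K-T} |g|) < 2 from g. Together with the trivial implications between the six
  notions this shows that they all coincide.\<close>

definition disjoint_supports :: "(nat \<Rightarrow> 'k \<Rightarrow> 'a::zero) \<Rightarrow> bool" where
  "disjoint_supports h \<longleftrightarrow> (\<forall>m m' t. m \<noteq> m' \<longrightarrow> h m t = 0 \<or> h m' t = 0)"

definition weak_tendsto :: "(nat \<Rightarrow> 'z::real_normed_vector) \<Rightarrow> 'z \<Rightarrow> bool" where
  "weak_tendsto G x \<longleftrightarrow> (\<forall>\<phi> :: 'z \<Rightarrow>\<^sub>L real. (\<lambda>m. \<phi> (G m)) \<longlonglongrightarrow> \<phi> x)"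

lemma compact_t2_bump:
  fixes s :: "'k::t2_space"
  assumes "compact (UNIV::'k set)" "open U" "s \<in> U"
  obtains h :: "'k \<Rightarrow> real" where "continuous_on UNIV h" "h s = 1" "\<And>t. t \<notin> U \<Longrightarrow> h t = 0"
    "\<And>t. 0 \<le> h t \<and> h t \<le> 1"
proof -
  have "compact_space (euclidean :: 'k topology)" using assms(1) by (simp add: compact_space_def)
  moreover have "Hausdorff_space (euclidean :: 'k topology)"
    unfolding Hausdorff_space_def disjnt_def by (metis open_openin topspace_euclidean hausdorff)
  ultimately have normal: "normal_space (euclidean :: 'k topology)"
    by (simp add: compact_Hausdorff_or_regular_imp_normal_space)
  obtain f where f: "continuous_map euclidean euclideanreal f" "f ` {s} \<subseteq> {1}" "f ` (-U) \<subseteq> {0}"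
    by (rule Urysohn_lemma_alt[OF normal, of "{s}" "-U" 1 0]) (use assms in \<open>auto simp: closed_open disjnt_def\<close>)
  define h where "h t = max 0 (min 1 (f t))" for t
  have "continuous_on UNIV h" unfolding h_def using f(1)
    by (auto intro!: continuous_intros simp: continuous_map_iff_continuous)
  then show ?thesis by (rule that) (use f in \<open>auto simp: h_def\<close>)
qed

lemma bump_off_smaller_neighbourhood:
  fixes t0 :: "'k::t2_space"
  assumes "compact (UNIV::'k set)" "t0 islimpt (UNIV::'k set)" "open W" "t0 \<in> W"
  shows "\<exists>s h W'. s \<in> W \<and> continuous_on UNIV h \<and> (\<forall>t. 0 \<le> h t \<and> h t \<le> (1::real)) \<and> h s = 1
     \<and> open W' \<and> t0 \<in> W' \<and> W' \<subseteq> W \<and> (\<forall>t. h t \<noteq> 0 \<longrightarrow> t \<in> W - W')"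
proof -
  obtain s where s: "s \<in> W" "s \<noteq> t0" by (rule islimptE[OF assms(2,4,3)]) auto
  obtain A B where AB: "open A" "open B" "s \<in> A" "t0 \<in> B" "A \<inter> B = {}"
    using hausdorff[OF s(2)] by blast
  obtain h where "continuous_on UNIV h" "h s = 1" "\<And>t. t \<notin> A \<inter> W \<Longrightarrow> h t = 0"
    "\<And>t. 0 \<le> h t \<and> h t \<le> (1::real)"
    using compact_t2_bump[OF assms(1), of "A \<inter> W" s] AB(1,3) assms(3) s(1) by blast
  with AB assms(3,4) s(1) show ?thesis by (intro exI[of _ s] exI[of _ h] exI[of _ "B \<inter> W"]) auto
qed

lemma disjoint_bumps_near_limit_point:
  fixes t0 :: "'k::t2_space"
  assumes "compact (UNIV::'k set)" "t0 islimpt (UNIV::'k set)" "open V" "t0 \<in> V"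
  obtains s :: "nat \<Rightarrow> 'k" and h :: "nat \<Rightarrow> 'k \<Rightarrow> real"
  where "\<And>m. s m \<in> V" "\<And>m. continuous_on UNIV (h m)" "\<And>m t. 0 \<le> h m t \<and> h m t \<le> 1"
    "\<And>m. h m (s m) = 1" "disjoint_supports h"
proof -
  define Q where "Q W s h W' \<longleftrightarrow> s \<in> W \<and> continuous_on UNIV h \<and> (\<forall>t. 0 \<le> h t \<and> h t \<le> (1::real))
     \<and> h s = 1 \<and> open W' \<and> t0 \<in> W' \<and> W' \<subseteq> W \<and> (\<forall>t. h t \<noteq> 0 \<longrightarrow> t \<in> W - W')" for W s h W'
  have "\<exists>s h W'. Q W s h W'" if "open W" "t0 \<in> W" for W
    using bump_off_smaller_neighbourhood[OF assms(1,2) that] unfolding Q_def .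
  then obtain S H N where SHN: "\<And>W. open W \<Longrightarrow> t0 \<in> W \<Longrightarrow> Q W (S W) (H W) (N W)"
    by metis
  define W where "W n = (N ^^ n) V" for n
  have W_nhd: "open (W n) \<and> t0 \<in> W n" for n
    by (induction n) (use assms SHN in \<open>auto simp: W_def Q_def\<close>)
  define s where "s n = S (W n)" for n
  define h where "h n = H (W n)" for n
  have Q: "Q (W n) (s n) (h n) (W (Suc n))" for n
    using SHN W_nhd unfolding s_def h_def W_def by simp
  have W_anti: "n \<le> m \<Longrightarrow> W m \<subseteq> W n" for n m
    using decseq_SucI[of W] Q by (auto simp: Q_def decseq_def)
  have disj: "h m t = 0 \<or> h m' t = 0" if "m < m'" for m m' t
    using Q[of m] Q[of m'] W_anti[of "Suc m" m'] that unfolding Q_def by auto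
  show ?thesis
  proof (rule that)
    show "s m \<in> V" for m using Q[of m] W_anti[of 0 m] by (auto simp: W_def Q_def)
    show "disjoint_supports h"
      unfolding disjoint_supports_def using disj by (metis linorder_neqE_nat)
    show "continuous_on UNIV (h m)" "h m (s m) = 1" for m using Q[of m] by (simp_all add: Q_def)
    show "0 \<le> h m t \<and> h m t \<le> 1" for m t using Q[of m] by (simp add: Q_def)
  qed
qed

lemma apply_bcontfun_sum:
  "apply_bcontfun (\<Sum>i\<in>A. f i) t = (\<Sum>i\<in>A. apply_bcontfun (f i) t)"
  by (induction A rule: infinite_finite_induct) auto

lemma norm_sum_disjoint_supports_le:
  fixes p :: "nat \<Rightarrow> ('a::topological_space \<Rightarrow>\<^sub>C 'b::real_normed_vector)"
  assumes pB: "\<And>n. norm (p n) \<le> B" and c: "\<And>n. \<bar>c n\<bar> \<le> 1"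
    and disj: "disjoint_supports (\<lambda>n. apply_bcontfun (p n))"
  shows "norm (\<Sum>n<N. c n *\<^sub>R p n) \<le> B"
proof (rule norm_bound)
  fix t
  show "norm (apply_bcontfun (\<Sum>n<N. c n *\<^sub>R p n) t) \<le> B"
  proof (cases "\<exists>n0<N. apply_bcontfun (p n0) t \<noteq> 0")
    case True
    then obtain n0 where n0: "n0 < N" "apply_bcontfun (p n0) t \<noteq> 0" by blast
    have "apply_bcontfun (\<Sum>n<N. c n *\<^sub>R p n) t = (\<Sum>n<N. c n *\<^sub>R apply_bcontfun (p n) t)"
      by (simp add: apply_bcontfun_sum)
    also have "\<dots> = (\<Sum>n\<in>{n0}. c n *\<^sub>R apply_bcontfun (p n) t)"
      using n0 disj unfolding disjoint_supports_def by (intro sum.mono_neutral_right) auto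
    finally have "norm (apply_bcontfun (\<Sum>n<N. c n *\<^sub>R p n) t) = \<bar>c n0\<bar> * norm (apply_bcontfun (p n0) t)"
      by simp
    also have "\<dots> \<le> 1 * B"
      by (rule mult_mono[OF c order.trans[OF norm_bounded pB]]) auto
    finally show ?thesis by simp
  next
    case False
    then show ?thesis using order.trans[OF norm_ge_zero pB[of 0]] by (simp add: apply_bcontfun_sum)
  qed
qed

lemma disjoint_supports_weakly_null:
  fixes p :: "nat \<Rightarrow> ('a::topological_space \<Rightarrow>\<^sub>C 'b::real_normed_vector)"
  assumes pB: "\<And>n. norm (p n) \<le> B"
    and disj: "disjoint_supports (\<lambda>n. apply_bcontfun (p n))"
  shows "weak_tendsto p 0"
  unfolding weak_tendsto_def
proof
  fix \<phi> :: "('a \<Rightarrow>\<^sub>C 'b) \<Rightarrow>\<^sub>L real"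
  have "(\<Sum>n<N. \<bar>\<phi> (p n)\<bar>) \<le> norm \<phi> * B" for N
  proof -
    have "(\<Sum>n<N. \<bar>\<phi> (p n)\<bar>) = \<phi> (\<Sum>n<N. sgn (\<phi> (p n)) *\<^sub>R p n)"
      by (simp add: blinfun.sum_right blinfun.scaleR_right sgn_mult_self_eq abs_sgn mult.commute)
    also have "\<dots> \<le> norm \<phi> * norm (\<Sum>n<N. sgn (\<phi> (p n)) *\<^sub>R p n)"
      using norm_blinfun[of \<phi> "\<Sum>n<N. sgn (\<phi> (p n)) *\<^sub>R p n"] by simp
    also have "\<dots> \<le> norm \<phi> * B"
      by (intro mult_left_mono norm_sum_disjoint_supports_le[OF pB _ disj]) (auto simp: abs_sgn_eq)
    finally show ?thesis .
  qed
  then have "summable (\<lambda>n. \<bar>\<phi> (p n)\<bar>)" by (intro summableI_nonneg_bounded) auto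
  then show "(\<lambda>n. \<phi> (p n)) \<longlonglongrightarrow> \<phi> 0"
    by (simp add: tendsto_rabs_zero_cancel[OF summable_LIMSEQ_zero])
qed

lemma bump_perturbation:
  fixes g :: "'k::topological_space \<Rightarrow>\<^sub>C 'x::real_normed_vector" and y :: 'x
  assumes hc: "\<And>m. continuous_on UNIV (h m)" and h01: "\<And>m t. 0 \<le> h m t \<and> h m t \<le> (1::real)"
    and hd: "disjoint_supports h"
    and g: "norm g \<le> 1" and y: "norm y \<le> 1"
  obtains G :: "nat \<Rightarrow> ('k \<Rightarrow>\<^sub>C 'x)"
  where "\<And>m t. apply_bcontfun (G m) t = (1 - h m t) *\<^sub>R apply_bcontfun g t + h m t *\<^sub>R y"
    and "\<And>m. norm (G m) \<le> 1"
    and "weak_tendsto G g"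
proof -
  define G' where "G' m t = (1 - h m t) *\<^sub>R apply_bcontfun g t + h m t *\<^sub>R y" for m t
  have "norm (G' m t) \<le> (1 - h m t) * norm (apply_bcontfun g t) + h m t * norm y" for m t
    using h01[of m t] unfolding G'_def by (auto intro!: order.trans[OF norm_triangle_ineq])
  also have "\<dots> m t \<le> (1 - h m t) * 1 + h m t * 1" for m t
    using h01[of m t] order.trans[OF norm_bounded g] y by (intro add_mono mult_left_mono) auto
  finally have G'_le: "norm (G' m t) \<le> 1" for m t by simp
  have "G' m \<in> bcontfun" for m
    by (rule bcontfun_normI[OF _ G'_le]) (auto simp: G'_def intro!: continuous_intros hc)
  then have G_apply: "apply_bcontfun (Bcontfun (G' m)) t = G' m t" for m t
    by (simp add: Bcontfun_inverse)
  show ?thesis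
  proof (rule that[of "\<lambda>m. Bcontfun (G' m)"])
    show "norm (Bcontfun (G' m)) \<le> 1" for m by (rule norm_bound) (simp add: G_apply G'_le)
    have diff_apply: "apply_bcontfun (Bcontfun (G' m)) t - apply_bcontfun g t = h m t *\<^sub>R (y - apply_bcontfun g t)" for m t
      by (simp add: G_apply G'_def algebra_simps)
    have diff_le: "norm (Bcontfun (G' m) - g) \<le> 2" for m
    proof (rule norm_bound)
      fix t
      have "norm (y - apply_bcontfun g t) \<le> 2"
        using norm_triangle_ineq4[of y "apply_bcontfun g t"] order.trans[OF norm_bounded g, of t] y by simp
      then show "norm (apply_bcontfun (Bcontfun (G' m) - g) t) \<le> 2"
        using h01[of m t] mult_mono[of "h m t" 1 "norm (y - apply_bcontfun g t)" 2]
        by (simp add: diff_apply)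
    qed
    have "weak_tendsto (\<lambda>m. Bcontfun (G' m) - g) 0"
      using diff_le by (rule disjoint_supports_weakly_null) (use hd in \<open>auto simp: disjoint_supports_def diff_apply\<close>)
    then show "weak_tendsto (\<lambda>m. Bcontfun (G' m)) g"
      by (simp add: weak_tendsto_def blinfun.diff_right LIM_zero_iff)
  qed (simp add: G_apply G'_def)
qed

lemma norm_diff_gt_of_opposite_value:
  fixes f w :: "'k::topological_space \<Rightarrow>\<^sub>C 'x::real_normed_vector"
  assumes "norm (apply_bcontfun f t0) = 1" "norm (apply_bcontfun f s - apply_bcontfun f t0) < \<epsilon>"
    and "apply_bcontfun w s = - apply_bcontfun f t0"
  shows "2 - \<epsilon> < norm (f - w)"
proof -
  have "2 = norm (apply_bcontfun f t0 + apply_bcontfun f t0)"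
    using assms(1) by (simp flip: scaleR_2)
  also have "\<dots> \<le> norm (apply_bcontfun f s + apply_bcontfun f t0) + norm (apply_bcontfun f s - apply_bcontfun f t0)"
    using norm_triangle_ineq4[of "apply_bcontfun f s + apply_bcontfun f t0" "apply_bcontfun f s - apply_bcontfun f t0"]
    by simp
  also have "norm (apply_bcontfun f s + apply_bcontfun f t0) = norm (apply_bcontfun (f - w) s)"
    using assms(3) by simp
  also have "\<dots> \<le> norm (f - w)" by (rule norm_bounded)
  finally show ?thesis using assms(2) by simp
qed

text \<open>The heart of the argument: the same points s_m serve every g of the unit ball.\<close>

lemma far_weak_approximants:
  fixes f :: "'k::t2_space \<Rightarrow>\<^sub>C 'x::real_normed_vector"
  assumes "compact (UNIV::'k set)" "t0 islimpt (UNIV::'k set)" "norm (apply_bcontfun f t0) = 1" "\<epsilon> > 0"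
  obtains s :: "nat \<Rightarrow> 'k"
  where "\<And>m w. apply_bcontfun w (s m) = - apply_bcontfun f t0 \<Longrightarrow> 2 - \<epsilon> < norm (f - w)"
    and "\<And>g. norm g \<le> 1 \<Longrightarrow> \<exists>G. (\<forall>m. norm (G m) \<le> 1 \<and> apply_bcontfun (G m) (s m) = - apply_bcontfun f t0)
                                \<and> weak_tendsto G g"
proof -
  define V where "V = {t. norm (apply_bcontfun f t - apply_bcontfun f t0) < \<epsilon>}"
  have V_open: "open V" unfolding V_def
    by (intro open_Collect_less continuous_intros continuous_on_apply_bcontfun)
  have t0_V: "t0 \<in> V" using assms(4) by (simp add: V_def)
  obtain s :: "nat \<Rightarrow> 'k" and h :: "nat \<Rightarrow> 'k \<Rightarrow> real"
    where "\<And>m. s m \<in> V" "\<And>m. continuous_on UNIV (h m)" "\<And>m t. 0 \<le> h m t \<and> h m t \<le> 1"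
      "\<And>m. h m (s m) = 1" "disjoint_supports h"
    using disjoint_bumps_near_limit_point[OF assms(1,2) V_open t0_V] by blast
  note sh = this
  show ?thesis
  proof (rule that[of s])
    show "2 - \<epsilon> < norm (f - w)" if "apply_bcontfun w (s m) = - apply_bcontfun f t0" for m w
      by (rule norm_diff_gt_of_opposite_value[OF assms(3) _ that]) (use sh(1) in \<open>simp add: V_def\<close>)
    fix g :: "'k \<Rightarrow>\<^sub>C 'x" assume g: "norm g \<le> 1"
    have y: "norm (- apply_bcontfun f t0) \<le> 1" using assms(3) by simp
    show "\<exists>G. (\<forall>m. norm (G m) \<le> 1 \<and> apply_bcontfun (G m) (s m) = - apply_bcontfun f t0)
                  \<and> weak_tendsto G g"
    proof (rule bump_perturbation[OF sh(2,3,5) g y])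
      fix G :: "nat \<Rightarrow> ('k \<Rightarrow>\<^sub>C 'x)"
      assume "\<And>m t. apply_bcontfun (G m) t = (1 - h m t) *\<^sub>R apply_bcontfun g t + h m t *\<^sub>R - apply_bcontfun f t0"
        "\<And>m. norm (G m) \<le> 1" "weak_tendsto G g"
      then show ?thesis using sh(4) by (intro exI[of _ G]) simp
    qed
  qed
qed

lemma SUP_norm_diff_eq_2I:
  fixes f :: "'z::real_normed_vector"
  assumes "A \<subseteq> cball 0 1" "A \<noteq> {}" "norm f = 1" "\<And>\<epsilon>. \<epsilon> > 0 \<Longrightarrow> \<exists>w\<in>A. 2 - \<epsilon> < norm (f - w)"
  shows "(SUP w\<in>A. norm (f - w)) = 2"
proof (rule antisym)
  have le2: "norm (f - w) \<le> 2" if "w \<in> A" for w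
    using norm_triangle_ineq4[of f w] assms(1,3) that by auto
  then show "(SUP w\<in>A. norm (f - w)) \<le> 2" using assms(2) by (auto intro!: cSUP_least)
  show "2 \<le> (SUP w\<in>A. norm (f - w))"
  proof (rule field_le_epsilon)
    fix \<epsilon> :: real assume "\<epsilon> > 0"
    then obtain w where "w \<in> A" "2 - \<epsilon> < norm (f - w)" using assms(4) by blast
    moreover have "norm (f - w) \<le> (SUP w\<in>A. norm (f - w))"
      using le2 \<open>w \<in> A\<close> by (auto intro!: cSUP_upper bdd_aboveI)
    ultimately show "2 \<le> (SUP w\<in>A. norm (f - w)) + \<epsilon>" by simp
  qed
qed

lemma slice_subset_cball: "slice S \<Longrightarrow> S \<subseteq> cball 0 1"
  unfolding slice_def by auto

lemma slice_eventually_contains_weak_limit: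
  fixes G :: "nat \<Rightarrow> 'z::real_normed_vector"
  assumes "slice S" "x \<in> S" "\<And>m. norm (G m) \<le> 1" "weak_tendsto G x"
  shows "eventually (\<lambda>m. G m \<in> S) sequentially"
proof -
  obtain \<phi> :: "'z \<Rightarrow>\<^sub>L real" and \<delta> where S: "S = {w \<in> cball 0 1. \<phi> w > norm \<phi> - \<delta>}"
    using assms(1) unfolding slice_def by blast
  have "eventually (\<lambda>m. \<phi> (G m) > norm \<phi> - \<delta>) sequentially"
    using assms(2) by (intro order_tendstoD(1)[OF assms(4)[unfolded weak_tendsto_def, rule_format]]) (simp add: S)
  then show ?thesis by eventually_elim (use assms(3) S in auto)
qed

lemma weakly_open_eventually_contains_weak_limit:
  fixes G :: "nat \<Rightarrow> 'z::real_normed_vector"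
  assumes "weakly_open U" "x \<in> U" "weak_tendsto G x"
  shows "eventually (\<lambda>m. G m \<in> U) sequentially"
proof -
  obtain F :: "('z \<Rightarrow>\<^sub>L real) set" and \<epsilon> where F: "finite F" "\<epsilon> > 0"
    "{y. \<forall>\<phi>\<in>F. \<bar>\<phi> y - \<phi> x\<bar> < \<epsilon>} \<subseteq> U"
    using assms(1,2) unfolding weakly_open_def by blast
  have "\<forall>\<phi>\<in>F. eventually (\<lambda>m. \<bar>\<phi> (G m) - \<phi> x\<bar> < \<epsilon>) sequentially"
  proof
    fix \<phi> :: "'z \<Rightarrow>\<^sub>L real"
    have "(\<lambda>m. \<bar>\<phi> (G m) - \<phi> x\<bar>) \<longlonglongrightarrow> 0"
      using assms(3) by (simp add: weak_tendsto_def LIM_zero_iff tendsto_rabs_zero_iff)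
    then show "eventually (\<lambda>m. \<bar>\<phi> (G m) - \<phi> x\<bar> < \<epsilon>) sequentially"
      using F(2) by (rule order_tendstoD(2))
  qed
  then have "eventually (\<lambda>m. \<forall>\<phi>\<in>F. \<bar>\<phi> (G m) - \<phi> x\<bar> < \<epsilon>) sequentially"
    by (rule eventually_ball_finite[OF F(1)])
  then show ?thesis by eventually_elim (use F(3) in blast)
qed

lemma ccs_subset_cball:
  assumes "ccs (A :: 'z::real_normed_vector set)"
  shows "A \<subseteq> cball 0 1"
proof
  fix w assume "w \<in> A"
  obtain n :: nat and lam S where lS: "\<forall>i<n. 0 < lam i \<and> lam i \<le> 1 \<and> slice (S i)" and "(\<Sum>i<n. lam i) = 1"
    and A: "A = {(\<Sum>i<n. lam i *\<^sub>R x i) | x. \<forall>i<n. x i \<in> S i}"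
    using assms unfolding ccs_def by blast
  then obtain x where w: "w = (\<Sum>i<n. lam i *\<^sub>R x i)" and x: "\<forall>i<n. x i \<in> S i"
    using \<open>w \<in> A\<close> by blast
  have "norm w \<le> (\<Sum>i<n. norm (lam i *\<^sub>R x i))" unfolding w by (rule norm_sum)
  also have "\<dots> \<le> (\<Sum>i<n. lam i * 1)"
    using lS x slice_subset_cball by (intro sum_mono) (fastforce intro: mult_left_mono)
  finally show "w \<in> cball 0 1" using \<open>(\<Sum>i<n. lam i) = 1\<close> by simp
qed

lemma ccs_nonempty: "ccs A \<Longrightarrow> A \<noteq> {}"
proof -
  assume "ccs A"
  then obtain n :: nat and lam S where "\<forall>i<n. slice (S i)"
    and A: "A = {(\<Sum>i<n. lam i *\<^sub>R x i) | x. \<forall>i<n. x i \<in> S i}"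
    unfolding ccs_def by blast
  then have "\<forall>i<n. \<exists>x. x \<in> S i" unfolding slice_def by blast
  then obtain x where "\<forall>i<n. x i \<in> S i" by metis
  then show "A \<noteq> {}" unfolding A by blast
qed

text \<open>Pick a point of each slice, approximate it weakly by functions taking the value y at s_m,
  and take the convex combination once every approximant has entered its slice.\<close>

lemma ccs_contains_value_at:
  fixes A :: "('k::topological_space \<Rightarrow>\<^sub>C 'x::real_normed_vector) set" and s :: "nat \<Rightarrow> 'k"
  assumes "ccs A"
    and approx: "\<And>g. norm g \<le> 1 \<Longrightarrow> \<exists>G. (\<forall>m. norm (G m) \<le> 1 \<and> apply_bcontfun (G m) (s m) = y) \<and> weak_tendsto G g"
  shows "\<exists>m. \<exists>w\<in>A. apply_bcontfun w (s m) = y"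
proof -
  obtain n :: nat and lam S where lS: "\<forall>i<n. 0 < lam i \<and> lam i \<le> 1 \<and> slice (S i)"
    and lam: "(\<Sum>i<n. lam i) = 1" and A: "A = {(\<Sum>i<n. lam i *\<^sub>R x i) | x. \<forall>i<n. x i \<in> S i}"
    using assms(1) unfolding ccs_def by blast
  have "\<forall>i<n. \<exists>x. x \<in> S i" using lS unfolding slice_def by blast
  then obtain x where x: "\<forall>i<n. x i \<in> S i" by metis
  have "\<forall>i\<in>{..<n}. \<exists>Gi. (\<forall>m. norm (Gi m) \<le> 1 \<and> apply_bcontfun (Gi m) (s m) = y) \<and> weak_tendsto Gi (x i)"
  proof
    fix i assume "i \<in> {..<n}"
    then have "norm (x i) \<le> 1" using x lS slice_subset_cball by fastforce
    then show "\<exists>Gi. (\<forall>m. norm (Gi m) \<le> 1 \<and> apply_bcontfun (Gi m) (s m) = y) \<and> weak_tendsto Gi (x i)"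
      by (rule approx)
  qed
  from bchoice[OF this] obtain G where
    G: "\<forall>i\<in>{..<n}. (\<forall>m. norm (G i m) \<le> 1 \<and> apply_bcontfun (G i m) (s m) = y) \<and> weak_tendsto (G i) (x i)" ..
  have "\<forall>i\<in>{..<n}. eventually (\<lambda>m. G i m \<in> S i) sequentially"
  proof
    fix i assume i: "i \<in> {..<n}"
    show "eventually (\<lambda>m. G i m \<in> S i) sequentially"
      by (rule slice_eventually_contains_weak_limit) (use i lS x G in auto)
  qed
  then have "eventually (\<lambda>m. \<forall>i\<in>{..<n}. G i m \<in> S i) sequentially"
    by (rule eventually_ball_finite[rotated]) simp
  then obtain m where m: "\<forall>i<n. G i m \<in> S i" unfolding eventually_sequentially by auto
  define w where "w = (\<Sum>i<n. lam i *\<^sub>R G i m)"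
  have "w \<in> A" unfolding A w_def using m by (intro CollectI exI[of _ "\<lambda>i. G i m"]) simp
  moreover have "apply_bcontfun w (s m) = (\<Sum>i<n. lam i) *\<^sub>R y"
    unfolding w_def scaleR_sum_left by (simp add: apply_bcontfun_sum G)
  ultimately show ?thesis using lam by auto
qed

lemma rel_weakly_open_ball_contains_value_at:
  fixes A :: "('k::topological_space \<Rightarrow>\<^sub>C 'x::real_normed_vector) set" and s :: "nat \<Rightarrow> 'k"
  assumes "rel_weakly_open_ball A" "A \<noteq> {}"
    and approx: "\<And>g. norm g \<le> 1 \<Longrightarrow> \<exists>G. (\<forall>m. norm (G m) \<le> 1 \<and> apply_bcontfun (G m) (s m) = y) \<and> weak_tendsto G g"
  shows "\<exists>m. \<exists>w\<in>A. apply_bcontfun w (s m) = y"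
proof -
  obtain U g where U: "weakly_open U" and A: "A = U \<inter> cball 0 1" and g: "g \<in> A"
    using assms(1,2) unfolding rel_weakly_open_ball_def by blast
  obtain G where G: "\<And>m. norm (G m) \<le> 1 \<and> apply_bcontfun (G m) (s m) = y" "weak_tendsto G g"
    using approx[of g] g A by auto
  have "eventually (\<lambda>m. G m \<in> U) sequentially"
    using U g A G(2) by (intro weakly_open_eventually_contains_weak_limit) auto
  then obtain m where "G m \<in> U" unfolding eventually_sequentially by auto
  then show ?thesis using A G(1)[of m] by (intro exI[of _ m] bexI[of _ "G m"]) auto
qed

theorem ccs_daugavet_point_at_limit_point:
  fixes f :: "'k::t2_space \<Rightarrow>\<^sub>C 'x::real_normed_vector"
  assumes K: "compact (UNIV::'k set)" and t0: "t0 islimpt (UNIV::'k set)"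
    and nf: "norm f = 1" and nft: "norm (apply_bcontfun f t0) = 1"
  shows "ccs_daugavet_point f"
  unfolding ccs_daugavet_point_def
proof (intro conjI allI impI nf)
  fix A :: "('k \<Rightarrow>\<^sub>C 'x) set"
  assume A: "ccs A"
  show "(SUP w\<in>A. norm (f - w)) = 2"
  proof (rule SUP_norm_diff_eq_2I[OF ccs_subset_cball[OF A] ccs_nonempty[OF A] nf])
    fix \<epsilon> :: real assume "\<epsilon> > 0"
    then obtain s :: "nat \<Rightarrow> 'k" where
      far: "\<And>m w. apply_bcontfun w (s m) = - apply_bcontfun f t0 \<Longrightarrow> 2 - \<epsilon> < norm (f - w)"
      and approx: "\<And>g. norm g \<le> 1 \<Longrightarrow> \<exists>G. (\<forall>m. norm (G m) \<le> 1 \<and> apply_bcontfun (G m) (s m) = - apply_bcontfun f t0)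
                                \<and> weak_tendsto G g"
      by (rule far_weak_approximants[OF K t0 nft]) (rule that)
    show "\<exists>w\<in>A. 2 - \<epsilon> < norm (f - w)"
      using ccs_contains_value_at[OF A approx] far by blast
  qed
qed

theorem super_daugavet_point_at_limit_point:
  fixes f :: "'k::t2_space \<Rightarrow>\<^sub>C 'x::real_normed_vector"
  assumes K: "compact (UNIV::'k set)" and t0: "t0 islimpt (UNIV::'k set)"
    and nf: "norm f = 1" and nft: "norm (apply_bcontfun f t0) = 1"
  shows "super_daugavet_point f"
  unfolding super_daugavet_point_def
proof (intro conjI allI impI nf)
  fix A :: "('k \<Rightarrow>\<^sub>C 'x) set"
  assume A: "rel_weakly_open_ball A \<and> A \<noteq> {}"
  then have "A \<subseteq> cball 0 1" unfolding rel_weakly_open_ball_def by blast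
  then show "(SUP w\<in>A. norm (f - w)) = 2"
  proof (rule SUP_norm_diff_eq_2I[OF _ conjunct2[OF A] nf])
    fix \<epsilon> :: real assume "\<epsilon> > 0"
    then obtain s :: "nat \<Rightarrow> 'k" where
      far: "\<And>m w. apply_bcontfun w (s m) = - apply_bcontfun f t0 \<Longrightarrow> 2 - \<epsilon> < norm (f - w)"
      and approx: "\<And>g. norm g \<le> 1 \<Longrightarrow> \<exists>G. (\<forall>m. norm (G m) \<le> 1 \<and> apply_bcontfun (G m) (s m) = - apply_bcontfun f t0)
                                \<and> weak_tendsto G g"
      by (rule far_weak_approximants[OF K t0 nft]) (rule that)
    show "\<exists>w\<in>A. 2 - \<epsilon> < norm (f - w)"
      using rel_weakly_open_ball_contains_value_at[OF conjunct1[OF A] conjunct2[OF A] approx] far by blast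
  qed
qed

lemma finite_open_if_no_limit_points:
  fixes T :: "'k::topological_space set"
  assumes "compact (UNIV::'k set)" "closed T" "\<And>t. t \<in> T \<Longrightarrow> \<not> t islimpt (UNIV::'k set)"
  shows "finite T" "open T"
proof -
  have singleton_open: "open {t}" if "t \<in> T" for t
    using assms(3)[OF that] by (simp add: islimpt_UNIV_iff)
  have "open (\<Union>t\<in>T. {t})" by (intro open_UN ballI singleton_open)
  then show "open T" by simp
  have "compact T" using compact_Int_closed[OF assms(1,2)] by simp
  then obtain C where "C \<subseteq> T" "finite C" "T \<subseteq> (\<Union>c\<in>C. {c})"
    by (rule compactE_image[of T T "\<lambda>t. {t}", OF _ singleton_open]) simp_all
  then show "finite T" by (simp add: finite_subset)
qed

lemma norm_bounded_below_one_off: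
  fixes g :: "'k::topological_space \<Rightarrow>\<^sub>C 'x::real_normed_vector"
  assumes "compact (UNIV::'k set)" "closed C" "norm g \<le> 1"
    and "\<And>t. t \<in> C \<Longrightarrow> norm (apply_bcontfun g t) \<noteq> 1"
  obtains M where "M < 1" "\<And>t. t \<in> C \<Longrightarrow> norm (apply_bcontfun g t) \<le> M"
proof (cases "C = {}")
  case True
  then show ?thesis using that[of 0] by simp
next
  case False
  have "continuous_on C (\<lambda>t. norm (apply_bcontfun g t))"
    by (intro continuous_on_norm continuous_on_apply_bcontfun)
  with compact_Int_closed[OF assms(1,2)]
  have "compact ((\<lambda>t. norm (apply_bcontfun g t)) ` C)" by (intro compact_continuous_image) simp_all
  then obtain t1 where t1: "t1 \<in> C" "\<forall>t\<in>C. norm (apply_bcontfun g t) \<le> norm (apply_bcontfun g t1)"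
    using compact_attains_sup[of "(\<lambda>t. norm (apply_bcontfun g t)) ` C"] False by auto
  have "norm (apply_bcontfun g t1) \<le> 1" using order.trans[OF norm_bounded assms(3)] .
  with assms(4)[OF t1(1)] have "norm (apply_bcontfun g t1) < 1" by simp
  with t1 show ?thesis using that by blast
qed

lemma norm_diff_le_one_if_inner_gt_half:
  fixes x y :: "'a::real_inner"
  assumes "norm x = 1" "norm y \<le> 1" "1/2 < inner x y"
  shows "norm (x - y) \<le> 1"
proof -
  have "(norm (x - y))\<^sup>2 = (norm x)\<^sup>2 - 2 * inner x y + (norm y)\<^sup>2"
    by (simp add: power2_norm_eq_inner inner_diff inner_commute)
  also have "\<dots> \<le> 1\<^sup>2" using assms power_le_one[of "norm y" 2] by simp
  finally show ?thesis by (rule power2_le_imp_le) simp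
qed

lemma summand_gt_half_if_sum_gt:
  fixes a :: "'a \<Rightarrow> real"
  assumes "finite T" "t \<in> T" "\<And>s. s \<in> T \<Longrightarrow> a s \<le> 1" "real (card T) - 1/2 < (\<Sum>s\<in>T. a s)"
  shows "1/2 < a t"
proof -
  have "(\<Sum>s\<in>T. a s) = a t + (\<Sum>s\<in>T - {t}. a s)" by (rule sum.remove[OF assms(1,2)])
  also have "(\<Sum>s\<in>T - {t}. a s) \<le> (\<Sum>s\<in>T - {t}. 1)" using assms(3) by (intro sum_mono) auto
  also have "(\<Sum>s\<in>T - {t}. 1::real) = real (card T) - 1"
    using assms(1,2) card_gt_0_iff[of T] by (auto simp: of_nat_diff)
  finally show ?thesis using assms(4) by simp
qed

lemma averaging_functional:
  fixes g :: "'k::topological_space \<Rightarrow>\<^sub>C 'x::real_inner"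
  assumes "finite T" "T \<noteq> {}" "norm g = 1" "\<And>t. t \<in> T \<Longrightarrow> norm (apply_bcontfun g t) = 1"
  obtains \<phi> :: "('k \<Rightarrow>\<^sub>C 'x) \<Rightarrow>\<^sub>L real"
  where "\<And>w. \<phi> w = (\<Sum>t\<in>T. inner (apply_bcontfun g t) (apply_bcontfun w t)) / real (card T)"
    and "norm \<phi> = 1" and "\<phi> g = 1"
proof -
  have card: "real (card T) > 0" using assms(1,2) by (simp add: card_gt_0_iff)
  define L where "L w = (\<Sum>t\<in>T. inner (apply_bcontfun g t) (apply_bcontfun w t)) / real (card T)"
    for w :: "'k \<Rightarrow>\<^sub>C 'x"
  have "bounded_linear (\<lambda>w::'k \<Rightarrow>\<^sub>C 'x. apply_bcontfun w t)" for t
    by (rule bounded_linear_intro[where K=1]) (auto simp: norm_bounded)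
  then have "bounded_linear L" unfolding L_def
    by (intro bounded_linear_compose[OF bounded_linear_divide bounded_linear_sum]
        bounded_linear_compose[OF bounded_linear_inner_right])
  then have apply_L: "Blinfun L w = L w" for w by (simp add: bounded_linear_Blinfun_apply)
  have "\<bar>L w\<bar> \<le> norm w" for w
  proof -
    have "\<bar>inner (apply_bcontfun g t) (apply_bcontfun w t)\<bar> \<le> norm w" if "t \<in> T" for t
      using Cauchy_Schwarz_ineq2[of "apply_bcontfun g t" "apply_bcontfun w t"] norm_bounded[of w t]
        assms(4)[OF that] by simp
    then have "\<bar>\<Sum>t\<in>T. inner (apply_bcontfun g t) (apply_bcontfun w t)\<bar> \<le> (\<Sum>t\<in>T. norm w)"
      by (intro order.trans[OF sum_abs] sum_mono)
    then show ?thesis using card by (simp add: L_def divide_le_eq mult.commute)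
  qed
  then have "norm (Blinfun L) \<le> 1" by (intro norm_blinfun_bound) (auto simp: apply_L)
  moreover have "L g = 1"
    using assms(4) card by (simp add: L_def power2_norm_eq_inner[symmetric])
  moreover have "1 \<le> norm (Blinfun L)"
    using norm_blinfun[of "Blinfun L" g] \<open>L g = 1\<close> assms(3) by (simp add: apply_L)
  ultimately show ?thesis by (intro that[of "Blinfun L"]) (auto simp: apply_L L_def)
qed

lemma norm_diff_le_if_inner_sum_large:
  fixes g w :: "'k::topological_space \<Rightarrow>\<^sub>C 'x::real_inner"
  assumes T: "finite T" "\<And>t. t \<in> T \<Longrightarrow> norm (apply_bcontfun g t) = 1"
    and M: "\<And>t. t \<notin> T \<Longrightarrow> norm (apply_bcontfun g t) \<le> M" and w: "norm w \<le> 1"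
    and sum: "real (card T) - 1/2 < (\<Sum>t\<in>T. inner (apply_bcontfun g t) (apply_bcontfun w t))"
  shows "norm (g - w) \<le> max 1 (M + 1)"
proof (rule norm_bound)
  fix t
  have w_le: "norm (apply_bcontfun w t') \<le> 1" for t' using norm_bounded[of w t'] w by simp
  show "norm (apply_bcontfun (g - w) t) \<le> max 1 (M + 1)"
  proof (cases "t \<in> T")
    case False
    then show ?thesis
      using M[of t] w_le[of t] norm_triangle_ineq4[of "apply_bcontfun g t" "apply_bcontfun w t"] by simp
  next
    case True
    have "inner (apply_bcontfun g s) (apply_bcontfun w s) \<le> 1" if "s \<in> T" for s
      using Cauchy_Schwarz_ineq2[of "apply_bcontfun g s" "apply_bcontfun w s"] T(2)[OF that] w_le[of s]
      by simp
    with sum have "1/2 < inner (apply_bcontfun g t) (apply_bcontfun w t)"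
      by (intro summand_gt_half_if_sum_gt[OF T(1) True])
    then show ?thesis using norm_diff_le_one_if_inner_gt_half[OF T(2)[OF True] w_le[of t]] by simp
  qed
qed

lemma delta_point_attains_norm_at_limit_point:
  fixes g :: "'k::t2_space \<Rightarrow>\<^sub>C 'x::real_inner"
  assumes K: "compact (UNIV::'k set)" and delta: "delta_point g"
  shows "\<exists>t0. t0 islimpt (UNIV::'k set) \<and> norm (apply_bcontfun g t0) = 1"
proof (rule ccontr)
  assume no_limit: "\<not> ?thesis"
  have ng: "norm g = 1" using delta by (simp add: delta_point_def)
  define T where "T = {t. norm (apply_bcontfun g t) = 1}"
  have gT: "norm (apply_bcontfun g t) = 1" if "t \<in> T" for t using that by (simp add: T_def)
  have "closed T" unfolding T_def
    by (intro closed_Collect_eq continuous_intros continuous_on_apply_bcontfun)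
  then have T: "finite T" "open T"
    using finite_open_if_no_limit_points[OF K] no_limit gT by blast+
  obtain M where M: "M < 1" "\<And>t. t \<notin> T \<Longrightarrow> norm (apply_bcontfun g t) \<le> M"
    by (rule norm_bounded_below_one_off[OF K _ eq_refl[OF ng], of "-T"]) (use T(2) T_def in auto)
  have "T \<noteq> {}"
  proof
    assume "T = {}"
    then have "norm g \<le> M" using M(2) by (intro norm_bound) auto
    then show False using ng M(1) by simp
  qed
  obtain \<phi> :: "('k \<Rightarrow>\<^sub>C 'x) \<Rightarrow>\<^sub>L real" where
    \<phi>: "\<And>w. \<phi> w = (\<Sum>t\<in>T. inner (apply_bcontfun g t) (apply_bcontfun w t)) / real (card T)"
    and n\<phi>: "norm \<phi> = 1" and \<phi>g: "\<phi> g = 1"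
    using averaging_functional[OF T(1) \<open>T \<noteq> {}\<close> ng gT] by blast
  have card: "real (card T) > 0" using T(1) \<open>T \<noteq> {}\<close> by (simp add: card_gt_0_iff)
  define S where "S = {w \<in> cball 0 1. \<phi> w > norm \<phi> - 1 / (2 * real (card T))}"
  have "g \<in> S" using ng card by (simp add: S_def n\<phi> \<phi>g)
  then have "slice S" unfolding slice_def S_def using card
    by (intro conjI exI[of _ \<phi>] exI[of _ "1 / (2 * real (card T))"]) auto
  then have sup2: "(SUP w\<in>S. norm (g - w)) = 2" using delta \<open>g \<in> S\<close> by (simp add: delta_point_def)
  have "norm (g - w) \<le> max 1 (M + 1)" if "w \<in> S" for w
  proof (rule norm_diff_le_if_inner_sum_large[OF T(1) gT M(2)])
    show "norm w \<le> 1" using that by (simp add: S_def)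
    have "1 - 1 / (2 * real (card T)) < (\<Sum>t\<in>T. inner (apply_bcontfun g t) (apply_bcontfun w t)) / real (card T)"
      using that by (simp add: S_def n\<phi> \<phi>)
    from mult_strict_left_mono[OF this card]
    show "real (card T) - 1/2 < (\<Sum>t\<in>T. inner (apply_bcontfun g t) (apply_bcontfun w t))"
      using card by (simp add: right_diff_distrib)
  qed
  then have "(SUP w\<in>S. norm (g - w)) \<le> max 1 (M + 1)" using \<open>g \<in> S\<close> by (intro cSUP_least) auto
  then show False using sup2 M(1) by simp
qed

lemma slice_rel_weakly_open_ball: "slice S \<Longrightarrow> rel_weakly_open_ball S"
proof -
  assume "slice S"
  then obtain \<phi> :: "'a \<Rightarrow>\<^sub>L real" and \<delta> where S: "S = {w \<in> cball 0 1. \<phi> w > norm \<phi> - \<delta>}"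
    unfolding slice_def by blast
  define U where "U = {w. \<phi> w > norm \<phi> - \<delta>}"
  have "weakly_open U" unfolding weakly_open_def
  proof
    fix x assume "x \<in> U"
    then have "\<phi> x - (norm \<phi> - \<delta>) > 0" by (simp add: U_def)
    moreover have "{y. \<forall>\<psi>\<in>{\<phi>}. \<bar>\<psi> y - \<psi> x\<bar> < \<phi> x - (norm \<phi> - \<delta>)} \<subseteq> U"
      by (auto simp: U_def)
    ultimately show "\<exists>F (\<epsilon>::real). finite F \<and> \<epsilon> > 0 \<and>
        {y. \<forall>\<psi>\<in>F. \<bar>blinfun_apply \<psi> y - blinfun_apply \<psi> x\<bar> < \<epsilon>} \<subseteq> U"
      by (intro exI[where x="{\<phi>}"] exI[where x="\<phi> x - (norm \<phi> - \<delta>)"]) simp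
  qed
  moreover have "S = U \<inter> cball 0 1" unfolding S U_def by auto
  ultimately show ?thesis unfolding rel_weakly_open_ball_def by blast
qed

lemma slice_ccs: "slice S \<Longrightarrow> ccs S"
  unfolding ccs_def
proof (intro exI[of _ "Suc 0"] exI[of _ "\<lambda>_. 1::real"] exI[of _ "\<lambda>_. S"] conjI)
  have "{\<Sum>i<Suc 0. 1 *\<^sub>R x i |x. \<forall>i<Suc 0. x i \<in> S} = {x (0::nat) |x. x 0 \<in> S}"
    by simp
  also have "\<dots> = S"
  proof
    show "S \<subseteq> {x (0::nat) |x. x 0 \<in> S}"
    proof
      fix w assume "w \<in> S"
      then show "w \<in> {x (0::nat) |x. x 0 \<in> S}" by (intro CollectI exI[of _ "\<lambda>_. w"]) simp
    qed
  qed auto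
  finally show "S = {\<Sum>i<Suc 0. 1 *\<^sub>R x i |x. \<forall>i<Suc 0. x i \<in> S}" ..
qed simp_all

lemma daugavet_point_imp_delta_point: "daugavet_point z \<Longrightarrow> delta_point z"
  unfolding daugavet_point_def delta_point_def by simp

lemma super_delta_point_imp_delta_point: "super_delta_point z \<Longrightarrow> delta_point z"
  unfolding super_delta_point_def delta_point_def by (simp add: slice_rel_weakly_open_ball)

lemma super_daugavet_point_imp_super_delta_point: "super_daugavet_point z \<Longrightarrow> super_delta_point z"
  unfolding super_daugavet_point_def super_delta_point_def by auto

lemma super_daugavet_point_imp_daugavet_point: "super_daugavet_point z \<Longrightarrow> daugavet_point z"
  unfolding super_daugavet_point_def daugavet_point_def
  by (simp add: slice_rel_weakly_open_ball slice_def)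

lemma ccs_daugavet_point_imp_ccs_delta_point: "ccs_daugavet_point z \<Longrightarrow> ccs_delta_point z"
  unfolding ccs_daugavet_point_def ccs_delta_point_def by simp

lemma ccs_delta_point_imp_delta_point: "ccs_delta_point z \<Longrightarrow> delta_point z"
  unfolding ccs_delta_point_def delta_point_def by (simp add: slice_ccs)

lemma ccs_daugavet_point_imp_daugavet_point: "ccs_daugavet_point z \<Longrightarrow> daugavet_point z"
  unfolding ccs_daugavet_point_def daugavet_point_def by (simp add: slice_ccs)

text \<open>Every notion implies that z is a \<Delta>-point, so it suffices to go back from there to the two
  strongest ones.\<close>

lemma six_notions_agreeI:
  assumes "delta_point z \<Longrightarrow> ccs_daugavet_point z \<and> super_daugavet_point z"
  shows "six_notions_agree z"
  unfolding six_notions_agree_def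
proof (intro conjI)
  show "daugavet_point z \<longleftrightarrow> delta_point z"
    using assms daugavet_point_imp_delta_point ccs_daugavet_point_imp_daugavet_point by blast
  show "super_delta_point z \<longleftrightarrow> delta_point z"
    using assms super_delta_point_imp_delta_point super_daugavet_point_imp_super_delta_point by blast
  show "super_daugavet_point z \<longleftrightarrow> delta_point z"
    using assms super_daugavet_point_imp_daugavet_point daugavet_point_imp_delta_point by blast
  show "ccs_delta_point z \<longleftrightarrow> delta_point z"
    using assms ccs_delta_point_imp_delta_point ccs_daugavet_point_imp_ccs_delta_point by blast
  show "ccs_daugavet_point z \<longleftrightarrow> delta_point z"
    using assms ccs_daugavet_point_imp_daugavet_point daugavet_point_imp_delta_point by blast
qed

lemma six_notions_agree_bcontfun:
  fixes g :: "'k::t2_space \<Rightarrow>\<^sub>C 'x::real_inner"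
  assumes K: "compact (UNIV::'k set)"
  shows "six_notions_agree g"
proof (rule six_notions_agreeI)
  assume delta: "delta_point g"
  then obtain t0 where t0: "t0 islimpt (UNIV::'k set)" and gt0: "norm (apply_bcontfun g t0) = 1"
    using delta_point_attains_norm_at_limit_point[OF K] by blast
  have g: "norm g = 1" using delta by (simp add: delta_point_def)
  show "ccs_daugavet_point g \<and> super_daugavet_point g"
    using ccs_daugavet_point_at_limit_point[OF K t0 g gt0] super_daugavet_point_at_limit_point[OF K t0 g gt0]
    by (rule conjI)
qed

theorem mainTheorem10:
  fixes dummy :: "'k::t2_space"
  assumes "compact (UNIV :: 'k set)"
  shows "(\<forall>(f :: 'k \<Rightarrow>\<^sub>C 'x::banach) (t0::'k).
            t0 islimpt (UNIV :: 'k set) \<and> norm f = 1 \<and> norm (apply_bcontfun f t0) = 1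
            \<longrightarrow> ccs_daugavet_point f)
       \<and> (\<forall>g :: 'k \<Rightarrow>\<^sub>C real. six_notions_agree g)
       \<and> (\<forall>h :: 'k \<Rightarrow>\<^sub>C complex. six_notions_agree h)"
proof (intro conjI allI impI)
  show "ccs_daugavet_point f"
    if "t0 islimpt UNIV \<and> norm f = 1 \<and> norm (apply_bcontfun f t0) = 1"
    for f :: "'k \<Rightarrow>\<^sub>C 'x" and t0
    using that by (intro ccs_daugavet_point_at_limit_point[OF assms]) auto
qed (rule six_notions_agree_bcontfun[OF assms])+

end
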